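(* Let $n\ge3$ and let $\phi_1(x),\dots,\phi_{2n-2}(x)$ be (nonvanishing) functions of $x$. Let $K$ be the symmetric $2n\times 2n$ matrix, rows and columns indexed $0,\dots,2n-1$, whose only nonzero entries are $K_{k,2n-1-k}=(-1)^{\min(k,\,2n-1-k)}$. Let $\tilde F(x)$ be the vector of $2n$ functions with entries (indexed $0,\dots,2n-1$) $$\tilde F_k=\mathcal I(1,\dots,k)\ (0\le k\le n-2),\quad \tilde F_{n-1}=\mathcal I(1,\dots,n-2,n-1),\quad \tilde F_n=\mathcal I(1,\dots,n-2,n),$$ $$\tilde F_{n+1+m}=\mathcal I(1,\dots,n-2,n-1,n,n+1,\dots,n+m)+\mathcal I(1,\dots,n-2,n,n-1,n+1,\dots,n+m)\quad(0\le m\le n-2).$$ Let $f_0(x)=\big(\prod_{i=1}^{2n-2}\phi_i(x)\big)^{-1/2}$ and $F=f_0\tilde F$. Let $s$ be the permutation of $\{1,\dots,2n-2\}$ with $s(i)=2n-1-i$ for $i\le n-2$ and $i\ge n+1$, $s(n-1)=n-1$, $s(n)=n$, and let $s$ also denote the substitution $\phi_a\mapsto\phi_{s(a)}$ applied to expressions in the $\phi_a$, their derivatives and iterated integrals (componentwise on vectors). Then $$F^{(i)}K(sF^{(j)})^T=0\quad\text{for } 0\le i,j\le n-1 \text{ with } i+j<2n-2,$$ $$F^{(n-1)}K(sF^{(n-1)})^T=2(-1)^{n-1}.$$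
   Context: $F^{(i)}$ denotes the componentwise $i$-th derivative. Iterated integrals: $\mathcal I(a_1\cdots a_k)(x)=\int_0^x\phi_{a_1}(x_1)\,dx_1\int_0^{x_1}\phi_{a_2}(x_2)\,dx_2\cdots\int_0^{x_{k-1}}\phi_{a_k}(x_k)\,dx_k$ with $\mathcal I(\varnothing)=1$ (so $\tilde F_0=1$). *)

theory Defs
  imports "HOL-Analysis.Analysis"
begin

definition vderiv :: "(real \<Rightarrow> complex) \<Rightarrow> real \<Rightarrow> complex" where
  "vderiv f = (\<lambda>x. vector_derivative f (at x))"

definition hderiv :: "nat \<Rightarrow> (real \<Rightarrow> complex) \<Rightarrow> real \<Rightarrow> complex" where
  "hderiv k f = (vderiv ^^ k) f"

definition oint :: "(real \<Rightarrow> complex) \<Rightarrow> real \<Rightarrow> complex" where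
  "oint g x = (if 0 \<le> x then integral {0..x} g else - integral {x..0} g)"

fun iint :: "(nat \<Rightarrow> real \<Rightarrow> complex) \<Rightarrow> nat list \<Rightarrow> real \<Rightarrow> complex" where
  "iint \<phi> [] x = 1"
| "iint \<phi> (a # as) x = oint (\<lambda>t. \<phi> a t * iint \<phi> as t) x"

definition Ftil :: "nat \<Rightarrow> (nat \<Rightarrow> real \<Rightarrow> complex) \<Rightarrow> nat \<Rightarrow> real \<Rightarrow> complex" where
  "Ftil n \<phi> k =
    (if k \<le> n - 2 then iint \<phi> [1..<k+1]
     else if k = n - 1 then iint \<phi> ([1..<n-1] @ [n-1])
     else if k = n then iint \<phi> ([1..<n-1] @ [n])
     else (let m = k - (n + 1) in
       (\<lambda>x. iint \<phi> ([1..<n-1] @ [n-1, n] @ [n+1..<n+m+1]) x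
          + iint \<phi> ([1..<n-1] @ [n, n-1] @ [n+1..<n+m+1]) x)))"

definition sperm :: "nat \<Rightarrow> nat \<Rightarrow> nat" where
  "sperm n i = (if i = n - 1 \<or> i = n then i
                else if 1 \<le> i \<and> i \<le> 2*n - 2 then 2*n - 1 - i else i)"

text \<open>Entry K_{k,2n-1-k} of the antidiagonal matrix K.\<close>
definition Kentry :: "nat \<Rightarrow> nat \<Rightarrow> complex" where
  "Kentry n k = (-1) ^ (min k (2*n - 1 - k))"

end

theory Submission
  imports Defs
begin

text \<open>Index the entries of \<open>Ftil\<close> by the vertices \<open>0, \<dots>, 2n - 1\<close> of a graph whose edges carry
  the weights \<open>\<phi>\<^sub>a\<close>. Then \<open>Ftil\<^sub>k\<close> is the sum, over the paths from \<open>0\<close> to \<open>k\<close>, of the iterated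
  integrals of the edge labels: it is row \<open>0\<close> of the fundamental solution \<open>Y\<close> of \<open>Y' = A Y\<close>,
  \<open>Y(0) = 1\<close>, where \<open>A\<close> is the weighted adjacency matrix. The labelling is such that
  \<open>A K + K (s A)\<^sup>T = 0\<close>, so \<open>Y K (s Y)\<^sup>T\<close> is constant, equal to \<open>K\<close>.
  Differentiating \<open>F = f\<^sub>0 Y\<^sub>0\<close> gives \<open>F\<^bsup>(i)\<^esup> = c\<^sub>i Y\<close> with \<open>c\<^sub>0 = f\<^sub>0 e\<^sub>0\<close> and
  \<open>c\<^sub>i\<^sub>+\<^sub>1 = c\<^sub>i' + c\<^sub>i A\<close>; since every edge raises the level of a vertex by one, \<open>c\<^sub>i\<close> vanishes on
  vertices of level above \<open>i\<close>. Hence \<open>F\<^bsup>(i)\<^esup> K (s F\<^bsup>(j)\<^esup>)\<^sup>T = \<Sum>\<^sub>p c\<^sub>i(p) (s c\<^sub>j)(2n-1-p) K\<^sub>p\<close>, and as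
  the levels of \<open>p\<close> and \<open>2n - 1 - p\<close> add up to \<open>2n - 2\<close>, this vanishes for \<open>i + j < 2n - 2\<close>,
  while for \<open>i = j = n - 1\<close> only the two vertices \<open>n - 1\<close>, \<open>n\<close> contribute, each with
  \<open>f\<^sub>0\<^sup>2 \<Prod>\<^sub>a \<phi>\<^sub>a K\<^sub>n\<^sub>-\<^sub>1 = (-1)\<^bsup>n-1\<^esup>\<close>. The smoothness of \<open>f\<^sub>0\<close> needed along the way follows
  from \<open>f\<^sub>0\<^sup>2 = 1 / \<Prod>\<^sub>a \<phi>\<^sub>a\<close> and the continuity of \<open>f\<^sub>0\<close>.\<close>

lemma sum_list_concat_map: "(\<Sum>y\<leftarrow>concat xss. f y) = (\<Sum>xs\<leftarrow>xss. \<Sum>y\<leftarrow>xs. f y)"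
  by (induction xss) auto

lemma sum_map_of:
  fixes f :: "'a \<Rightarrow> 'b \<Rightarrow> 'c::comm_monoid_add"
  assumes "distinct (map fst xs)" "fst ` set xs \<subseteq> S" "finite S"
  shows "(\<Sum>q\<in>S. case map_of xs q of Some a \<Rightarrow> f q a | None \<Rightarrow> 0) = (\<Sum>(q, a)\<leftarrow>xs. f q a)"
  using assms
proof (induction xs)
  case (Cons qa xs)
  obtain r b where qa: "qa = (r, b)" by force
  have "r \<in> S" "map_of xs r = None"
    using Cons.prems qa by (auto simp: map_of_eq_None_iff)
  have "(\<Sum>q\<in>S. case map_of (qa # xs) q of Some a \<Rightarrow> f q a | None \<Rightarrow> 0)
      = (\<Sum>q\<in>S. (if q = r then f r b else 0) + (case map_of xs q of Some a \<Rightarrow> f q a | None \<Rightarrow> 0))"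
    by (rule sum.cong) (auto simp: qa \<open>map_of xs r = None\<close>)
  also have "\<dots> = f r b + (\<Sum>(q, a)\<leftarrow>xs. f q a)"
    using Cons \<open>r \<in> S\<close> qa by (simp add: sum.distrib)
  finally show ?case by (simp add: qa)
qed simp

lemma sum_mult_sum_swap:
  fixes c :: "nat \<Rightarrow> 'a::comm_semiring_0"
  shows "(\<Sum>k<N. c k * (\<Sum>r<M. a r * b r k)) = (\<Sum>r<M. a r * (\<Sum>k<N. c k * b r k))"
proof -
  have "(\<Sum>k<N. c k * (\<Sum>r<M. a r * b r k)) = (\<Sum>k<N. \<Sum>r<M. a r * (c k * b r k))"
    by (simp add: sum_distrib_left algebra_simps)
  also have "\<dots> = (\<Sum>r<M. \<Sum>k<N. a r * (c k * b r k))"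
    by (rule sum.swap)
  finally show ?thesis by (simp add: sum_distrib_left)
qed

lemma sum_mult_sum_assoc:
  fixes c :: "nat \<Rightarrow> 'a::comm_semiring_0"
  shows "(\<Sum>p<N. c p * (\<Sum>q<M. a p q * b q)) = (\<Sum>q<M. (\<Sum>p<N. c p * a p q) * b q)"
proof -
  have "(\<Sum>p<N. c p * (\<Sum>q<M. a p q * b q)) = (\<Sum>p<N. \<Sum>q<M. c p * a p q * b q)"
    by (simp add: sum_distrib_left algebra_simps)
  also have "\<dots> = (\<Sum>q<M. \<Sum>p<N. c p * a p q * b q)"
    by (rule sum.swap)
  finally show ?thesis by (simp add: sum_distrib_right)
qed

lemma sum_bilinear_swap:
  fixes c d K :: "nat \<Rightarrow> 'a::comm_semiring_0"
  shows "(\<Sum>k<N. (\<Sum>p<N. c p * Y p k) * K k * (\<Sum>q<N. d q * Z q k)) =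
         (\<Sum>p<N. \<Sum>q<N. c p * d q * (\<Sum>k<N. Y p k * K k * Z q k))"
proof -
  have "(\<Sum>k<N. (\<Sum>p<N. c p * Y p k) * K k * (\<Sum>q<N. d q * Z q k)) =
        (\<Sum>k<N. \<Sum>p<N. \<Sum>q<N. c p * d q * (Y p k * K k * Z q k))"
    by (simp add: sum_distrib_left sum_distrib_right algebra_simps)
  also have "\<dots> = (\<Sum>p<N. \<Sum>k<N. \<Sum>q<N. c p * d q * (Y p k * K k * Z q k))"
    by (rule sum.swap)
  also have "\<dots> = (\<Sum>p<N. \<Sum>q<N. \<Sum>k<N. c p * d q * (Y p k * K k * Z q k))"
    by (rule sum.cong[OF refl], rule sum.swap)
  finally show ?thesis by (simp add: sum_distrib_left)
qed

section \<open>Derivatives and smooth functions\<close>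

lemma hderiv_0 [simp]: "hderiv 0 f = f"
  by (simp add: hderiv_def)

lemma hderiv_Suc: "hderiv (Suc k) f = vderiv (hderiv k f)"
  by (simp add: hderiv_def)

lemma hderiv_Suc_right: "hderiv (Suc k) f = hderiv k (vderiv f)"
  by (simp add: hderiv_def funpow_Suc_right del: funpow.simps)

lemma vderiv_eqI: "(f has_vector_derivative D) (at x) \<Longrightarrow> vderiv f x = D"
  by (simp add: vderiv_def vector_derivative_at)

lemma has_vector_derivative_vderiv:
  "f differentiable (at x) \<Longrightarrow> (f has_vector_derivative vderiv f x) (at x)"
  by (simp add: vderiv_def vector_derivative_works[symmetric])

lemma vderiv_add:
  "f differentiable (at x) \<Longrightarrow> g differentiable (at x) \<Longrightarrow>
   vderiv (\<lambda>x. f x + g x) x = vderiv f x + vderiv g x"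
  by (intro vderiv_eqI has_vector_derivative_add has_vector_derivative_vderiv)

lemma vderiv_mult:
  "f differentiable (at x) \<Longrightarrow> g differentiable (at x) \<Longrightarrow>
   vderiv (\<lambda>x. f x * g x) x = f x * vderiv g x + vderiv f x * g x"
  by (intro vderiv_eqI has_vector_derivative_mult has_vector_derivative_vderiv)

lemma has_vector_derivative_sum_list:
  "(\<And>y. y \<in> set ys \<Longrightarrow> (f y has_vector_derivative f' y) (at x)) \<Longrightarrow>
   ((\<lambda>x. \<Sum>y\<leftarrow>ys. f y x) has_vector_derivative (\<Sum>y\<leftarrow>ys. f' y)) (at x)"
  by (induction ys) (auto intro!: has_vector_derivative_add)

definition smooth :: "(real \<Rightarrow> complex) \<Rightarrow> bool" where
  "smooth f \<longleftrightarrow> (\<forall>k x. hderiv k f differentiable (at x))"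

lemma smooth_differentiable: "smooth f \<Longrightarrow> f differentiable (at x)"
  unfolding smooth_def by (metis hderiv_0)

lemma smooth_continuous_on: "smooth f \<Longrightarrow> continuous_on S f"
  by (intro continuous_at_imp_continuous_on ballI differentiable_imp_continuous_within
      smooth_differentiable)

lemma smooth_vderiv: "smooth f \<Longrightarrow> smooth (vderiv f)"
  unfolding smooth_def by (metis hderiv_Suc_right)

lemma smooth_if_vderiv_closed:
  assumes closed: "\<And>g. g \<in> T \<Longrightarrow> (\<forall>x. g differentiable (at x)) \<and> vderiv g \<in> T"
    and "f \<in> T"
  shows "smooth f"
proof -
  have "hderiv k g \<in> T" if "g \<in> T" for k g
    using that by (induction k arbitrary: g) (simp_all add: hderiv_Suc_right closed)
  then show ?thesis
    using \<open>f \<in> T\<close> closed unfolding smooth_def by blast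
qed

inductive_set add_mult_closure :: "(real \<Rightarrow> complex) set \<Rightarrow> (real \<Rightarrow> complex) set"
  for E where
  base: "f \<in> E \<Longrightarrow> f \<in> add_mult_closure E"
| add: "f \<in> add_mult_closure E \<Longrightarrow> g \<in> add_mult_closure E \<Longrightarrow>
    (\<lambda>x. f x + g x) \<in> add_mult_closure E"
| mult: "f \<in> add_mult_closure E \<Longrightarrow> g \<in> add_mult_closure E \<Longrightarrow>
    (\<lambda>x. f x * g x) \<in> add_mult_closure E"

text \<open>By the Leibniz rule the closure is stable under \<open>vderiv\<close> as soon as the generators are.\<close>

lemma smooth_add_mult_closure:
  assumes gen: "\<And>e. e \<in> E \<Longrightarrow> (\<forall>x. e differentiable (at x)) \<and> vderiv e \<in> add_mult_closure E"
    and "f \<in> add_mult_closure E"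
  shows "smooth f"
proof (rule smooth_if_vderiv_closed[OF _ \<open>f \<in> add_mult_closure E\<close>])
  fix f assume "f \<in> add_mult_closure E"
  then show "(\<forall>x. f differentiable (at x)) \<and> vderiv f \<in> add_mult_closure E"
  proof induction
    case (base f)
    then show ?case using gen by blast
  next
    case (add f g)
    then have "vderiv (\<lambda>x. f x + g x) = (\<lambda>x. vderiv f x + vderiv g x)"
      by (simp add: fun_eq_iff vderiv_add)
    with add show ?case by (auto intro: add_mult_closure.add)
  next
    case (mult f g)
    then have "vderiv (\<lambda>x. f x * g x) = (\<lambda>x. f x * vderiv g x + vderiv f x * g x)"
      by (simp add: fun_eq_iff vderiv_mult)
    with mult show ?case by (auto intro!: add_mult_closure.add add_mult_closure.mult)
  qed
qed

lemma smooth_generator: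
  "smooth f \<Longrightarrow> Collect smooth \<subseteq> E \<Longrightarrow>
   (\<forall>x. f differentiable (at x)) \<and> vderiv f \<in> add_mult_closure E"
  by (auto intro: smooth_differentiable add_mult_closure.base smooth_vderiv)

lemma smooth_add: "smooth f \<Longrightarrow> smooth g \<Longrightarrow> smooth (\<lambda>x. f x + g x)"
  by (rule smooth_add_mult_closure[of "Collect smooth"])
    (auto intro: smooth_differentiable smooth_vderiv add_mult_closure.base add_mult_closure.add)

lemma smooth_mult: "smooth f \<Longrightarrow> smooth g \<Longrightarrow> smooth (\<lambda>x. f x * g x)"
  by (rule smooth_add_mult_closure[of "Collect smooth"])
    (auto intro: smooth_differentiable smooth_vderiv add_mult_closure.base add_mult_closure.mult)

lemma smooth_const: "smooth (\<lambda>x. c)"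
proof (rule smooth_if_vderiv_closed[of "range (\<lambda>c x. c)"])
  fix g :: "real \<Rightarrow> complex" assume "g \<in> range (\<lambda>c x. c)"
  then obtain d where "g = (\<lambda>x. d)" by auto
  moreover have "vderiv (\<lambda>x. d) = (\<lambda>x. 0)" by (simp add: fun_eq_iff vderiv_def)
  ultimately show "(\<forall>x. g differentiable (at x)) \<and> vderiv g \<in> range (\<lambda>c x. c)"
    by auto
qed auto

lemma smooth_sum:
  "finite S \<Longrightarrow> (\<And>i. i \<in> S \<Longrightarrow> smooth (f i)) \<Longrightarrow> smooth (\<lambda>x. \<Sum>i\<in>S. f i x)"
  by (induction S rule: finite_induct) (auto intro: smooth_add smooth_const)

lemma smooth_prod:
  "finite S \<Longrightarrow> (\<And>i. i \<in> S \<Longrightarrow> smooth (f i)) \<Longrightarrow> smooth (\<lambda>x. \<Prod>i\<in>S. f i x)"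
  by (induction S rule: finite_induct) (auto intro: smooth_mult smooth_const)

lemma smooth_inverse:
  assumes h: "smooth h" and nz: "\<And>x. h x \<noteq> 0"
  shows "smooth (\<lambda>x. inverse (h x))"
proof (rule smooth_add_mult_closure[of "Collect smooth \<union> {\<lambda>x. inverse (h x)}"])
  let ?E = "Collect smooth \<union> {\<lambda>x. inverse (h x)}"
  fix e assume "e \<in> ?E"
  then consider "smooth e" | "e = (\<lambda>x. inverse (h x))" by auto
  then show "(\<forall>x. e differentiable (at x)) \<and> vderiv e \<in> add_mult_closure ?E"
  proof cases
    case 1
    then show ?thesis by (rule smooth_generator) blast
  next
    case 2
    have d: "(e has_vector_derivative (- 1) * (vderiv h x * (inverse (h x) * inverse (h x)))) (at x)"
      for x
    proof -
      have "((inverse \<circ> h) has_vector_derivative vderiv h x * - (inverse (h x) ^ Suc (Suc 0)))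
          (at x within UNIV)"
        by (intro field_vector_diff_chain_within has_vector_derivative_vderiv smooth_differentiable
            h DERIV_inverse nz)
      then show ?thesis using 2 by (simp add: o_def power2_eq_square)
    qed
    then have "vderiv e = (\<lambda>x. (- 1) * (vderiv h x * (inverse (h x) * inverse (h x))))"
      by (simp add: fun_eq_iff vderiv_eqI)
    moreover have "(\<lambda>x. (- 1) * (vderiv h x * (inverse (h x) * inverse (h x)))) \<in> add_mult_closure ?E"
      by (intro add_mult_closure.mult add_mult_closure.base) (auto simp: 2 smooth_const smooth_vderiv h)
    ultimately show ?thesis
      using d by (auto intro: differentiableI_vector)
  qed
qed (rule add_mult_closure.base, simp)

lemma eventually_nhds_eq_if_square_eq:
  fixes f g :: "'a::t2_space \<Rightarrow> complex"
  assumes "isCont f x" "isCont g x" "g x = f x" "f x \<noteq> 0" "\<And>y. f y ^ 2 = g y ^ 2"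
  shows "\<forall>\<^sub>F y in nhds x. f y = g y"
proof -
  define c where "c = f x"
  have "\<forall>\<^sub>F y in at x. dist (f y) c < norm c" "\<forall>\<^sub>F y in at x. dist (g y) c < norm c"
    using assms by (auto simp: isCont_def c_def intro!: tendstoD)
  then have "\<forall>\<^sub>F y in at x. f y = g y"
  proof eventually_elim
    case (elim y)
    have "f y \<noteq> - g y"
    proof
      assume "f y = - g y"
      then have "norm (g y + c) < norm c" "norm (g y - c) < norm c"
        using elim by (auto simp: dist_norm norm_minus_commute add.commute)
      moreover have "norm (2 * c) \<le> norm (g y + c) + norm (g y - c)"
        using norm_triangle_ineq4[of "g y + c" "g y - c"] by simp
      ultimately show False by (simp add: norm_mult)
    qed
    then show ?case using assms(5)[of y] by (metis power2_eq_iff)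
  qed
  then show ?thesis using assms(3) by (simp add: eventually_nhds_conv_at)
qed

text \<open>Near \<open>x\<close>, \<open>f\<close> coincides with the differentiable square root
  \<open>f x * csqrt (f y ^ 2 / f x ^ 2)\<close>, whose radicand is close to \<open>1\<close>.\<close>

lemma differentiable_if_square_differentiable:
  fixes f :: "real \<Rightarrow> complex"
  assumes cont: "continuous (at x) f" and nz: "f x \<noteq> 0" and sq: "(\<lambda>y. f y ^ 2) differentiable (at x)"
  shows "f differentiable (at x)"
proof -
  define q where "q y = f y ^ 2 / f x ^ 2" for y
  define g where "g y = f x * csqrt (q y)" for y
  have "q differentiable (at x)"
    unfolding q_def by (intro differentiable_divide sq differentiable_const) (simp add: nz)
  moreover have "q x = 1" using nz by (simp add: q_def)
  ultimately have "(csqrt \<circ> q) differentiable (at x)"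
    by (intro differentiable_chain_at field_differentiable_imp_differentiable
        field_differentiable_at_csqrt) auto
  then have g_diff: "g differentiable (at x)"
    unfolding g_def by (intro differentiable_mult differentiable_const) (simp add: o_def)
  have "g x = f x" using \<open>q x = 1\<close> by (simp add: g_def)
  moreover have "f y ^ 2 = g y ^ 2" for y
    using nz by (simp add: g_def q_def power_mult_distrib)
  ultimately have "\<forall>\<^sub>F y in nhds x. f y = g y"
    by (intro eventually_nhds_eq_if_square_eq cont differentiable_imp_continuous_within g_diff nz)
  moreover obtain D where "(g has_vector_derivative D) (at x)"
    using g_diff vector_derivative_works by blast
  ultimately have "(f has_vector_derivative D) (at x)"
    using has_vector_derivative_cong_ev[where S=UNIV and f=f and g=g] \<open>g x = f x\<close> by simp
  then show ?thesis by (rule differentiableI_vector)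
qed

lemma smooth_if_square_smooth:
  fixes f :: "real \<Rightarrow> complex"
  assumes cont: "continuous_on UNIV f" and nz: "\<And>x. f x \<noteq> 0" and sq: "smooth (\<lambda>y. f y ^ 2)"
  shows "smooth f"
proof -
  define h where "h y = f y ^ 2" for y
  define r where "r x = 1 / 2 * (vderiv h x * inverse (h x))" for x
  have f_diff: "f differentiable (at x)" for x
    using cont by (intro differentiable_if_square_differentiable[OF _ nz smooth_differentiable[OF sq]])
      (simp add: continuous_on_eq_continuous_at)
  have "smooth r"
    unfolding r_def h_def
    by (intro smooth_mult smooth_vderiv smooth_inverse smooth_const sq) (simp add: nz)
  have vderiv_f: "vderiv f x = f x * r x" for x
  proof -
    have "(h has_vector_derivative f x * vderiv f x + vderiv f x * f x) (at x)"
      unfolding h_def power2_eq_square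
      by (intro has_vector_derivative_mult has_vector_derivative_vderiv f_diff)
    then have "vderiv h x = 2 * f x * vderiv f x" by (simp add: vderiv_eqI)
    then show ?thesis using nz[of x] by (simp add: r_def h_def field_simps power2_eq_square)
  qed
  show ?thesis
  proof (rule smooth_add_mult_closure[of "Collect smooth \<union> {f}"])
    fix e assume "e \<in> Collect smooth \<union> {f}"
    then consider "smooth e" | "e = f" by auto
    then show "(\<forall>x. e differentiable (at x)) \<and> vderiv e \<in> add_mult_closure (Collect smooth \<union> {f})"
    proof cases
      case 1
      then show ?thesis by (rule smooth_generator) blast
    next
      case 2
      have "vderiv f = (\<lambda>x. f x * r x)" by (simp add: fun_eq_iff vderiv_f)
      moreover have "(\<lambda>x. f x * r x) \<in> add_mult_closure (Collect smooth \<union> {f})"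
        by (intro add_mult_closure.mult add_mult_closure.base) (auto simp: \<open>smooth r\<close>)
      ultimately show ?thesis using 2 f_diff by auto
    qed
  qed (rule add_mult_closure.base, simp)
qed

lemma smooth_if_square_inverse_smooth:
  fixes f :: "real \<Rightarrow> complex"
  assumes "continuous_on UNIV f" "smooth P" "\<And>x. f x ^ 2 * P x = 1"
  shows "smooth f"
proof (rule smooth_if_square_smooth[OF assms(1)])
  show "f x \<noteq> 0" for x
    using assms(3)[of x] by auto
  have "(\<lambda>y. f y ^ 2) = (\<lambda>y. inverse (P y))"
    using assms(3) by (metis inverse_unique mult.commute)
  moreover have "P y \<noteq> 0" for y
    using assms(3)[of y] by auto
  ultimately show "smooth (\<lambda>y. f y ^ 2)"
    using smooth_inverse[OF assms(2)] by simp
qed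

section \<open>Iterated integrals\<close>

lemma has_vector_derivative_oint:
  fixes g :: "real \<Rightarrow> complex"
  assumes g: "continuous_on UNIV g"
  shows "(oint g has_vector_derivative g x) (at x)"
proof -
  define a where "a = min 0 x - 1"
  define b where "b = max 0 x + 1"
  have integrable: "g integrable_on {c..d}" for c d
    by (rule integrable_continuous_real) (rule continuous_on_subset[OF g], simp)
  have eq: "oint g y = integral {a..y} g - integral {a..0} g" if "y \<in> {a<..<b}" for y
  proof (cases "0 \<le> y")
    case True
    have "integral {a..0} g + integral {0..y} g = integral {a..y} g"
      using True a_def by (intro Henstock_Kurzweil_Integration.integral_combine integrable) auto
    then show ?thesis using True by (simp add: oint_def algebra_simps)
  next
    case False
    have "integral {a..y} g + integral {y..0} g = integral {a..0} g"
      using that False by (intro Henstock_Kurzweil_Integration.integral_combine integrable) auto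
    then show ?thesis using False by (simp add: oint_def algebra_simps)
  qed
  have x: "x \<in> {a<..<b}" by (auto simp: a_def b_def)
  have "((\<lambda>u. integral {a..u} g) has_vector_derivative g x) (at x within {a..b})"
    using x by (intro integral_has_vector_derivative continuous_on_subset[OF g]) auto
  then have "((\<lambda>u. integral {a..u} g) has_vector_derivative g x) (at x within {a<..<b})"
    by (rule has_vector_derivative_within_subset) auto
  then have "((\<lambda>u. integral {a..u} g) has_vector_derivative g x) (at x)"
    using x has_vector_derivative_within_open[of x "{a<..<b}"] by auto
  then have "((\<lambda>u. integral {a..u} g - integral {a..0} g) has_vector_derivative g x) (at x)"
    using has_vector_derivative_diff[OF _ has_vector_derivative_const] by fastforce
  then show ?thesis
    by (rule has_vector_derivative_transform_within_open[OF _ _ x]) (use eq in auto)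
qed

lemma has_vector_derivative_iint_Cons:
  assumes "continuous_on UNIV (\<phi> a)" "continuous_on UNIV (iint \<phi> L)"
  shows "(iint \<phi> (a # L) has_vector_derivative \<phi> a x * iint \<phi> L x) (at x)"
proof -
  have "iint \<phi> (a # L) = oint (\<lambda>t. \<phi> a t * iint \<phi> L t)" by (simp add: fun_eq_iff)
  then show ?thesis
    by (simp only:) (intro has_vector_derivative_oint continuous_on_mult assms)
qed

lemma continuous_on_iint:
  "(\<And>b. b \<in> set L \<Longrightarrow> continuous_on UNIV (\<phi> b)) \<Longrightarrow> continuous_on UNIV (iint \<phi> L)"
proof (induction L)
  case (Cons a L)
  show ?case
  proof (rule continuous_on_vector_derivative)
    fix x
    show "(iint \<phi> (a # L) has_vector_derivative \<phi> a x * iint \<phi> L x) (at x)"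
      using Cons by (intro has_vector_derivative_iint_Cons) auto
  qed
qed (simp add: continuous_on_const)

section \<open>The labelled graph and its path sums\<close>

text \<open>Vertex \<open>k\<close> stands for the entry \<open>Ftil n \<phi> k\<close>; an edge labelled \<open>a\<close> carries the weight
  \<open>\<phi> a\<close>. The vertices \<open>n - 1\<close> and \<open>n\<close> form a diamond between \<open>n - 2\<close> and \<open>n + 1\<close>, and the
  words read along the paths from \<open>0\<close> to \<open>k\<close> are exactly the words of the iterated integrals in
  \<open>Ftil n \<phi> k\<close>.\<close>

definition out_edges :: "nat \<Rightarrow> nat \<Rightarrow> (nat \<times> nat) list" where
  "out_edges n p =
    (if p + 3 \<le> n then [(p + 1, p + 1)]
     else if p + 2 = n then [(n - 1, n - 1), (n, n)]
     else if p + 1 = n then [(n + 1, n)]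
     else if p = n then [(n + 1, n - 1)]
     else if p + 2 \<le> 2 * n then [(p + 1, p)]
     else [])"

lemma out_edges_bounds:
  assumes "n \<ge> 3" "(q, a) \<in> set (out_edges n p)"
  shows "p < q \<and> q < 2 * n \<and> a \<in> {1..2 * n - 2}"
  using assms by (auto simp: out_edges_def split: if_splits)

lemma distinct_out_edges: "n \<ge> 3 \<Longrightarrow> distinct (map fst (out_edges n p))"
  by (auto simp: out_edges_def)

lemma out_edges_cases:
  assumes "(q, a) \<in> set (out_edges n p)"
  obtains (low) "p + 3 \<le> n" "q = p + 1" "a = p + 1"
  | (fork) "p + 2 = n" "q = a" "a = n - 1 \<or> a = n"
  | (join1) "p + 1 = n" "q = n + 1" "a = n"
  | (join2) "p = n" "q = n + 1" "a = n - 1"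
  | (high) "n < p" "p + 2 \<le> 2 * n" "q = p + 1" "a = p"
  using assms by (auto simp: out_edges_def split: if_splits)

function paths :: "nat \<Rightarrow> nat \<Rightarrow> nat \<Rightarrow> nat list list" where
  "paths n p k =
    (if p = k then [[]]
     else if p < k then concat (map (\<lambda>(q, a). map (Cons a) (paths n q k)) (out_edges n p))
     else [])"
  by pat_completeness auto
termination
  by (relation "Wellfounded.measure (\<lambda>(n, p, k). k - p)") (auto simp: out_edges_def split: if_splits)

declare paths.simps [simp del]

lemma paths_refl [simp]: "paths n p p = [[]]"
  by (simp add: paths.simps)

lemma paths_gt: "k < p \<Longrightarrow> paths n p k = []"
  by (simp add: paths.simps)

lemma paths_lt:
  "p < k \<Longrightarrow> paths n p k = concat (map (\<lambda>(q, a). map (Cons a) (paths n q k)) (out_edges n p))"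
  by (simp add: paths.simps)

lemma paths_labels:
  "n \<ge> 3 \<Longrightarrow> L \<in> set (paths n p k) \<Longrightarrow> a \<in> set L \<Longrightarrow> a \<in> {1..2 * n - 2}"
proof (induction n p k arbitrary: L rule: paths.induct)
  case (1 n p k)
  show ?case
  proof (cases "p < k")
    case True
    with "1.prems"(2) obtain q b L' where
      qb: "(q, b) \<in> set (out_edges n p)" "L = b # L'" "L' \<in> set (paths n q k)"
      by (auto simp: paths_lt)
    then show ?thesis
      using "1.IH"[OF _ True qb(1) refl "1.prems"(1) qb(3)] "1.prems" True
        out_edges_bounds[OF "1.prems"(1) qb(1)] by auto
  next
    case False
    then show ?thesis using "1.prems"(2,3) by (cases "p = k") (auto simp: paths_gt)
  qed
qed

lemma paths_chain:
  assumes "\<And>q. p \<le> q \<Longrightarrow> q < r \<Longrightarrow> out_edges n q = [(Suc q, g q)]" "p \<le> r" "r \<le> k"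
  shows "paths n p k = map (\<lambda>L. map g [p..<r] @ L) (paths n r k)"
  using assms
proof (induction "r - p" arbitrary: p)
  case (Suc d)
  then have "paths n (Suc p) k = map (\<lambda>L. map g [Suc p..<r] @ L) (paths n r k)" by simp
  moreover have "out_edges n p = [(Suc p, g p)]" "p < k" "[p..<r] = p # [Suc p..<r]"
    using Suc by (auto simp: upt_conv_Cons)
  ultimately show ?case by (simp add: paths_lt o_def)
qed (simp add: map_idI)

lemma paths_from_fork:
  assumes n: "n \<ge> 3" and k: "n - 1 \<le> k" "k < 2 * n"
  shows "paths n (n - 2) k =
    (if k = n - 1 then [[n - 1]]
     else if k = n then [[n]]
     else [[n - 1, n] @ [n + 1..<k], [n, n - 1] @ [n + 1..<k]])"
proof -
  have fork: "paths n (n - 2) k = map (Cons (n - 1)) (paths n (n - 1) k) @ map (Cons n) (paths n n k)"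
    using n k by (subst paths_lt) (auto simp: out_edges_def)
  have high: "out_edges n q = [(Suc q, q)]" if "n + 1 \<le> q" "q < k" for q
    using that k by (auto simp: out_edges_def)
  consider "k = n - 1" | "k = n" | "n + 1 \<le> k" using k by linarith
  then show ?thesis
  proof cases
    case 1
    then show ?thesis unfolding fork using n by (simp add: paths_gt)
  next
    case 2
    then have "paths n (n - 1) k = []"
      using n by (subst paths_lt) (auto simp: paths_gt out_edges_def)
    then show ?thesis unfolding fork using 2 n by simp
  next
    case 3
    then have "paths n (n + 1) k = [[n + 1..<k]]"
      using paths_chain[of "n + 1" k n "\<lambda>q. q" k] high by (simp del: upt_Suc)
    then have "paths n (n - 1) k = [n # [n + 1..<k]]" "paths n n k = [(n - 1) # [n + 1..<k]]"
      using n 3 by (subst paths_lt; auto simp: out_edges_def)+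
    then show ?thesis unfolding fork using 3 n by auto
  qed
qed

lemma paths_from_0:
  assumes n: "n \<ge> 3" and k: "k < 2 * n"
  shows "paths n 0 k =
    (if k \<le> n - 2 then [[1..<k + 1]]
     else if k = n - 1 then [[1..<n - 1] @ [n - 1]]
     else if k = n then [[1..<n - 1] @ [n]]
     else [[1..<n - 1] @ [n - 1, n] @ [n + 1..<k], [1..<n - 1] @ [n, n - 1] @ [n + 1..<k]])"
proof -
  have low: "out_edges n q = [(Suc q, Suc q)]" if "q < n - 2" for q
    using that by (auto simp: out_edges_def)
  have map_Suc: "map Suc [0..<m] = [1..<m + 1]" for m
    by (simp add: map_Suc_upt del: upt_Suc)
  show ?thesis
  proof (cases "k \<le> n - 2")
    case True
    have "paths n 0 k = map (\<lambda>L. map Suc [0..<k] @ L) (paths n k k)"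
      by (rule paths_chain) (use low True in auto)
    then show ?thesis using True by (simp only: map_Suc) simp
  next
    case False
    have "paths n 0 k = map (\<lambda>L. map Suc [0..<n - 2] @ L) (paths n (n - 2) k)"
      by (rule paths_chain) (use low False in auto)
    then have "paths n 0 k = map (\<lambda>L. [1..<n - 1] @ L) (paths n (n - 2) k)"
      using n by (simp only: map_Suc) (simp del: upt_Suc add: Suc_diff_Suc numeral_2_eq_2)
    then show ?thesis using False n k by (simp add: paths_from_fork del: upt_Suc)
  qed
qed

definition path_sum :: "(nat \<Rightarrow> real \<Rightarrow> complex) \<Rightarrow> nat \<Rightarrow> nat \<Rightarrow> nat \<Rightarrow> real \<Rightarrow> complex" where
  "path_sum \<phi> n p k x = (\<Sum>L\<leftarrow>paths n p k. iint \<phi> L x)"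

lemma Ftil_eq_path_sum:
  assumes "n \<ge> 3" "k < 2 * n"
  shows "Ftil n \<phi> k = path_sum \<phi> n 0 k"
proof (cases "n + 1 \<le> k")
  case True
  then have m: "n + (k - (n + 1)) + 1 = k" and "\<not> k \<le> n - 2" "k \<noteq> n - 1" "k \<noteq> n" by auto
  then show ?thesis
    using assms unfolding Ftil_def Let_def m
    by (simp add: path_sum_def paths_from_0 fun_eq_iff del: upt_Suc iint.simps)
qed (use assms in \<open>auto simp: Ftil_def path_sum_def paths_from_0 fun_eq_iff\<close>)

lemma path_sum_gt: "k < p \<Longrightarrow> path_sum \<phi> n p k x = 0"
  by (simp add: path_sum_def paths_gt)

lemma path_sum_at_0: "path_sum \<phi> n p k 0 = (if p = k then 1 else 0)"
proof (cases "p < k")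
  case True
  then have "iint \<phi> L 0 = 0" if "L \<in> set (paths n p k)" for L
    using that by (auto simp: paths_lt oint_def)
  then show ?thesis using True by (simp add: path_sum_def cong: map_cong)
qed (auto simp: path_sum_def paths_gt)

definition adj :: "(nat \<Rightarrow> real \<Rightarrow> complex) \<Rightarrow> nat \<Rightarrow> nat \<Rightarrow> nat \<Rightarrow> real \<Rightarrow> complex" where
  "adj \<phi> n p q x = (case map_of (out_edges n p) q of Some a \<Rightarrow> \<phi> a x | None \<Rightarrow> 0)"

lemma adj_nonzero:
  assumes "adj \<phi> n p q x \<noteq> 0"
  shows "\<exists>a. (q, a) \<in> set (out_edges n p)"
  using assms by (auto simp: adj_def split: option.splits dest: map_of_SomeD)

lemma sum_adj_mult:
  assumes "n \<ge> 3"
  shows "(\<Sum>q<2 * n. adj \<phi> n p q x * v q) = (\<Sum>(q, a)\<leftarrow>out_edges n p. \<phi> a x * v q)"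
proof -
  have "(\<Sum>q<2 * n. adj \<phi> n p q x * v q)
      = (\<Sum>q<2 * n. case map_of (out_edges n p) q of Some a \<Rightarrow> \<phi> a x * v q | None \<Rightarrow> 0)"
    by (rule sum.cong) (auto simp: adj_def split: option.split)
  also have "\<dots> = (\<Sum>(q, a)\<leftarrow>out_edges n p. \<phi> a x * v q)"
    using out_edges_bounds[OF assms] distinct_out_edges[OF assms]
    by (intro sum_map_of) auto
  finally show ?thesis .
qed

lemma has_vector_derivative_path_sum:
  assumes n: "n \<ge> 3" and cont: "\<forall>a\<in>{1..2 * n - 2}. continuous_on UNIV (\<phi> a)"
  shows "(path_sum \<phi> n p k has_vector_derivative
          (\<Sum>q<2 * n. adj \<phi> n p q x * path_sum \<phi> n q k x)) (at x)"
proof (cases "p < k")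
  case False
  have "adj \<phi> n p q x * path_sum \<phi> n q k x = 0" for q
  proof (cases "adj \<phi> n p q x = 0")
    case False
    then obtain a where "(q, a) \<in> set (out_edges n p)" using adj_nonzero by blast
    then have "k < q" using out_edges_bounds[OF n] \<open>\<not> p < k\<close> by fastforce
    then show ?thesis by (simp add: path_sum_gt)
  qed simp
  then have "(\<Sum>q<2 * n. adj \<phi> n p q x * path_sum \<phi> n q k x) = 0"
    by (intro sum.neutral) blast
  moreover have "path_sum \<phi> n p k = (\<lambda>x. if p = k then 1 else 0)"
    using False by (auto simp: fun_eq_iff path_sum_def paths_gt)
  ultimately show ?thesis by (simp add: has_vector_derivative_const)
next
  case True
  have labels: "\<forall>b\<in>set (a # L). continuous_on UNIV (\<phi> b)"
    if "(q, a) \<in> set (out_edges n p)" "L \<in> set (paths n q k)" for q a L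
    using cont out_edges_bounds[OF n that(1)] paths_labels[OF n that(2)] by auto
  have "path_sum \<phi> n p k = (\<lambda>x. \<Sum>(q, a)\<leftarrow>out_edges n p. \<Sum>L\<leftarrow>paths n q k. iint \<phi> (a # L) x)"
    using True
    by (simp add: fun_eq_iff path_sum_def paths_lt sum_list_concat_map o_def case_prod_unfold)
  moreover have "((\<lambda>x. \<Sum>(q, a)\<leftarrow>out_edges n p. \<Sum>L\<leftarrow>paths n q k. iint \<phi> (a # L) x)
      has_vector_derivative (\<Sum>(q, a)\<leftarrow>out_edges n p. \<Sum>L\<leftarrow>paths n q k. \<phi> a x * iint \<phi> L x))
      (at x)"
    unfolding case_prod_unfold
    by (intro has_vector_derivative_sum_list has_vector_derivative_iint_Cons continuous_on_iint)
      (use labels in \<open>auto simp del: iint.simps\<close>)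
  ultimately show ?thesis
    by (simp add: path_sum_def sum_adj_mult[OF n] sum_list_const_mult case_prod_unfold)
qed

section \<open>The reflection symmetry\<close>

lemma sperm_sperm: "a \<in> {1..2 * n - 2} \<Longrightarrow> sperm n (sperm n a) = a"
  by (auto simp: sperm_def)

lemma sperm_range: "n \<ge> 3 \<Longrightarrow> a \<in> {1..2 * n - 2} \<Longrightarrow> sperm n a \<in> {1..2 * n - 2}"
  by (auto simp: sperm_def)

lemma out_edges_reflect:
  assumes n: "n \<ge> 3" and e: "(q, a) \<in> set (out_edges n p)"
  shows "(2 * n - 1 - p, sperm n a) \<in> set (out_edges n (2 * n - 1 - q))"
  using e
proof (cases rule: out_edges_cases)
  case low
  define m where "m = 2 * n - 2 - p"
  have "2 * n - 1 - q = m" "\<not> m + 3 \<le> n" "m + 2 \<noteq> n" "m + 1 \<noteq> n" "m \<noteq> n" "m + 2 \<le> 2 * n"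
    "m + 1 = 2 * n - 1 - p"
    using low n unfolding m_def by arith+
  moreover have "sperm n a = m"
    using low n unfolding m_def sperm_def by simp
  ultimately show ?thesis unfolding out_edges_def by simp
next
  case fork
  from fork(3) show ?thesis
  proof
    assume "a = n - 1"
    moreover have "2 * n - 1 - q = n" "2 * n - 1 - p = n + 1"
      using fork n \<open>a = n - 1\<close> by arith+
    ultimately show ?thesis by (simp add: out_edges_def sperm_def)
  next
    assume "a = n"
    moreover have "2 * n - 1 - q = n - 1" "2 * n - 1 - p = n + 1" "\<not> n - 1 + 3 \<le> n"
      "n - 1 + 2 \<noteq> n" "n - 1 + 1 = n"
      using fork n \<open>a = n\<close> by arith+
    ultimately show ?thesis by (simp add: out_edges_def sperm_def)
  qed
next
  case join1
  then have "2 * n - 1 - q = n - 2" "2 * n - 1 - p = n" "\<not> n - 2 + 3 \<le> n" "n - 2 + 2 = n"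
    using n by arith+
  then show ?thesis using join1 by (simp add: out_edges_def sperm_def)
next
  case join2
  then have "2 * n - 1 - q = n - 2" "2 * n - 1 - p = n - 1" "\<not> n - 2 + 3 \<le> n" "n - 2 + 2 = n"
    using n by arith+
  then show ?thesis using join2 by (simp add: out_edges_def sperm_def)
next
  case high
  define m where "m = 2 * n - 2 - p"
  have "2 * n - 1 - q = m" "m + 3 \<le> n" "m + 1 = 2 * n - 1 - p"
    using high n unfolding m_def by arith+
  moreover have "sperm n a = m + 1"
    using high n unfolding m_def sperm_def by (simp; arith)
  ultimately show ?thesis unfolding out_edges_def by simp
qed

lemma Kentry_Suc:
  assumes "r \<noteq> n - 1" "Suc r < 2 * n"
  shows "Kentry n (Suc r) = - Kentry n r"
proof (cases "r < n - 1")
  case True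
  then have "min (Suc r) (2 * n - 1 - Suc r) = Suc r" "min r (2 * n - 1 - r) = r" by auto
  then show ?thesis by (simp add: Kentry_def)
next
  case False
  then have "min (Suc r) (2 * n - 1 - Suc r) = 2 * n - 2 - r"
    "min r (2 * n - 1 - r) = Suc (2 * n - 2 - r)"
    using assms by auto
  then show ?thesis by (simp add: Kentry_def)
qed

lemma Kentry_out_edge:
  assumes n: "n \<ge> 3" and e: "(q, a) \<in> set (out_edges n p)"
  shows "Kentry n q = - Kentry n p"
proof -
  have middle: "Kentry n n = Kentry n (n - 1)"
    using n by (simp add: Kentry_def min_def)
  from e show ?thesis
  proof (cases rule: out_edges_cases)
    case fork
    then show ?thesis
      using n Kentry_Suc[of p n] middle by (auto simp: numeral_3_eq_3 Suc_diff_Suc)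
  next
    case join1
    then have "p = n - 1" by simp
    then show ?thesis using join1 n Kentry_Suc[of n n] middle by simp
  qed (use n Kentry_Suc[of p n] in auto)
qed

lemma map_of_out_edges_reflect:
  assumes n: "n \<ge> 3" and "p < 2 * n" "q < 2 * n"
  shows "map_of (out_edges n (2 * n - 1 - q)) (2 * n - 1 - p) =
         map_option (sperm n) (map_of (out_edges n p) q)"
proof (cases "map_of (out_edges n p) q")
  case None
  have "(2 * n - 1 - p, b) \<notin> set (out_edges n (2 * n - 1 - q))" for b
  proof
    assume "(2 * n - 1 - p, b) \<in> set (out_edges n (2 * n - 1 - q))"
    from out_edges_reflect[OF n this] have "(q, sperm n b) \<in> set (out_edges n p)"
      using assms by simp
    with None show False using distinct_out_edges[OF n] by (simp add: map_of_eq_None_iff image_iff)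
  qed
  then have "map_of (out_edges n (2 * n - 1 - q)) (2 * n - 1 - p) = None"
    by (force simp: map_of_eq_None_iff)
  with None show ?thesis by simp
next
  case (Some a)
  then have "(q, a) \<in> set (out_edges n p)" by (rule map_of_SomeD)
  from out_edges_reflect[OF n this] show ?thesis
    using Some distinct_out_edges[OF n] by simp
qed

lemma adj_reflect:
  assumes n: "n \<ge> 3" and "p < 2 * n" "q < 2 * n"
  shows "adj (\<lambda>a. \<phi> (sperm n a)) n (2 * n - 1 - q) (2 * n - 1 - p) x = adj \<phi> n p q x"
proof (cases "map_of (out_edges n p) q")
  case (Some a)
  then have "a \<in> {1..2 * n - 2}"
    using out_edges_bounds[OF n] by (blast dest: map_of_SomeD)
  then show ?thesis
    using Some map_of_out_edges_reflect[OF assms] by (simp add: adj_def sperm_sperm)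
qed (use map_of_out_edges_reflect[OF assms] in \<open>simp add: adj_def\<close>)

definition Kmat :: "nat \<Rightarrow> nat \<Rightarrow> nat \<Rightarrow> complex" where
  "Kmat n p q = (if p + q = 2 * n - 1 then Kentry n p else 0)"

lemma adj_Kmat_skew:
  assumes n: "n \<ge> 3" and p: "p < 2 * n" and q: "q < 2 * n"
  shows "(\<Sum>r<2 * n. adj \<phi> n p r x * Kmat n r q)
       + (\<Sum>r<2 * n. adj (\<lambda>a. \<phi> (sperm n a)) n q r x * Kmat n p r) = 0"
proof -
  define r where "r = 2 * n - 1 - q"
  have "(\<Sum>r<2 * n. adj \<phi> n p r x * Kmat n r q)
      = (\<Sum>r'<2 * n. if r' = r then adj \<phi> n p r' x * Kentry n r' else 0)"
    using q by (intro sum.cong) (auto simp: Kmat_def r_def)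
  also have "\<dots> = adj \<phi> n p r x * Kentry n r"
    using n by (simp add: r_def)
  finally have left: "(\<Sum>r<2 * n. adj \<phi> n p r x * Kmat n r q) = adj \<phi> n p r x * Kentry n r" .
  have "(\<Sum>r<2 * n. adj (\<lambda>a. \<phi> (sperm n a)) n q r x * Kmat n p r)
      = (\<Sum>r'<2 * n. if r' = 2 * n - 1 - p then adj (\<lambda>a. \<phi> (sperm n a)) n q r' x * Kentry n p else 0)"
    using p by (intro sum.cong) (auto simp: Kmat_def)
  also have "\<dots> = adj (\<lambda>a. \<phi> (sperm n a)) n (2 * n - 1 - r) (2 * n - 1 - p) x * Kentry n p"
    using n q by (simp add: r_def)
  also have "\<dots> = adj \<phi> n p r x * Kentry n p"
    using adj_reflect[OF n p, of r] q by (simp add: r_def)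
  finally have right: "(\<Sum>r<2 * n. adj (\<lambda>a. \<phi> (sperm n a)) n q r x * Kmat n p r)
      = adj \<phi> n p r x * Kentry n p" .
  have "Kentry n r = - Kentry n p" if "adj \<phi> n p r x \<noteq> 0"
    using adj_nonzero[OF that] Kentry_out_edge[OF n] by blast
  then show ?thesis
    unfolding left right by (cases "adj \<phi> n p r x = 0") (simp_all add: algebra_simps)
qed

definition pairing :: "(nat \<Rightarrow> real \<Rightarrow> complex) \<Rightarrow> nat \<Rightarrow> nat \<Rightarrow> nat \<Rightarrow> real \<Rightarrow> complex" where
  "pairing \<phi> n p q x =
    (\<Sum>k<2 * n. path_sum \<phi> n p k x * Kentry n k * path_sum (\<lambda>a. \<phi> (sperm n a)) n q (2 * n - 1 - k) x)"

lemma has_vector_derivative_pairing: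
  assumes n: "n \<ge> 3" and cont: "\<forall>a\<in>{1..2 * n - 2}. continuous_on UNIV (\<phi> a)"
  shows "(pairing \<phi> n p q has_vector_derivative
          (\<Sum>r<2 * n. adj \<phi> n p r x * pairing \<phi> n r q x)
        + (\<Sum>r<2 * n. adj (\<lambda>a. \<phi> (sperm n a)) n q r x * pairing \<phi> n p r x)) (at x)"
proof -
  let ?\<psi> = "\<lambda>a. \<phi> (sperm n a)"
  have cont': "\<forall>a\<in>{1..2 * n - 2}. continuous_on UNIV (?\<psi> a)"
    using cont sperm_range[OF n] by auto
  define DY where "DY k = (\<Sum>r<2 * n. adj \<phi> n p r x * path_sum \<phi> n r k x)" for k
  define DZ where "DZ k = (\<Sum>r<2 * n. adj ?\<psi> n q r x * path_sum ?\<psi> n r (2 * n - 1 - k) x)" for k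
  have "(pairing \<phi> n p q has_vector_derivative
      (\<Sum>k<2 * n. path_sum \<phi> n p k x * Kentry n k * DZ k
                 + DY k * Kentry n k * path_sum ?\<psi> n q (2 * n - 1 - k) x)) (at x)"
    unfolding pairing_def[abs_def] DY_def DZ_def
    by (intro has_vector_derivative_sum has_vector_derivative_mult has_vector_derivative_mult_left
        has_vector_derivative_path_sum n cont cont')
  moreover have "(\<Sum>k<2 * n. path_sum \<phi> n p k x * Kentry n k * DZ k)
      = (\<Sum>r<2 * n. adj ?\<psi> n q r x * pairing \<phi> n p r x)"
    unfolding DZ_def pairing_def by (rule sum_mult_sum_swap)
  moreover have "(\<Sum>k<2 * n. DY k * Kentry n k * path_sum ?\<psi> n q (2 * n - 1 - k) x)
      = (\<Sum>r<2 * n. adj \<phi> n p r x * pairing \<phi> n r q x)"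
    using sum_mult_sum_swap[where c="\<lambda>k. Kentry n k * path_sum ?\<psi> n q (2 * n - 1 - k) x"
        and a="\<lambda>r. adj \<phi> n p r x" and b="\<lambda>r k. path_sum \<phi> n r k x" and N="2 * n" and M="2 * n"]
    unfolding DY_def pairing_def by (simp add: algebra_simps)
  ultimately show ?thesis by (simp add: sum.distrib add.commute)
qed

text \<open>Since \<open>Kmat\<close> solves the same linear equation (by \<open>adj_Kmat_skew\<close>) and \<open>A\<close> is strictly
  upper triangular, an induction from the bottom right corner shows that the pairing is
  constant.\<close>

lemma pairing_eq_Kmat:
  assumes n: "n \<ge> 3" and cont: "\<forall>a\<in>{1..2 * n - 2}. continuous_on UNIV (\<phi> a)"
  shows "p < 2 * n \<Longrightarrow> q < 2 * n \<Longrightarrow> pairing \<phi> n p q x = Kmat n p q"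
proof (induction "4 * n - (p + q)" arbitrary: p q x rule: less_induct)
  case less
  let ?\<psi> = "\<lambda>a. \<phi> (sperm n a)"
  have later: "r < 2 * n \<and> p < r" if "adj w n p r y \<noteq> 0" for w p r y
    using adj_nonzero[OF that] out_edges_bounds[OF n] by blast
  have IH: "pairing \<phi> n r q' y = Kmat n r q'" if "p + q < r + q'" "r < 2 * n" "q' < 2 * n" for r q' y
    using that by (intro less.hyps) auto
  have "(pairing \<phi> n p q has_vector_derivative 0) (at y)" for y
  proof -
    have left: "(\<Sum>r<2 * n. adj \<phi> n p r y * pairing \<phi> n r q y)
        = (\<Sum>r<2 * n. adj \<phi> n p r y * Kmat n r q)"
    proof (rule sum.cong[OF refl])
      fix r
      show "adj \<phi> n p r y * pairing \<phi> n r q y = adj \<phi> n p r y * Kmat n r q"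
        using later[of \<phi> p r y] IH[of r q y] less.prems by (cases "adj \<phi> n p r y = 0") auto
    qed
    have right: "(\<Sum>r<2 * n. adj ?\<psi> n q r y * pairing \<phi> n p r y)
        = (\<Sum>r<2 * n. adj ?\<psi> n q r y * Kmat n p r)"
    proof (rule sum.cong[OF refl])
      fix r
      show "adj ?\<psi> n q r y * pairing \<phi> n p r y = adj ?\<psi> n q r y * Kmat n p r"
        using later[of ?\<psi> q r y] IH[of p r y] less.prems by (cases "adj ?\<psi> n q r y = 0") auto
    qed
    show ?thesis
      using has_vector_derivative_pairing[OF n cont, of p q y]
      unfolding left right adj_Kmat_skew[OF n less.prems] .
  qed
  then obtain c where "\<And>y. pairing \<phi> n p q y = c"
    using has_vector_derivative_zero_constant[of UNIV "pairing \<phi> n p q"] by auto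
  moreover have "pairing \<phi> n p q 0 = Kmat n p q"
  proof -
    have "pairing \<phi> n p q 0
        = (\<Sum>k<2 * n. if k = p then Kentry n k * (if q = 2 * n - 1 - k then 1 else 0) else 0)"
      unfolding pairing_def path_sum_at_0 by (rule sum.cong) auto
    then show ?thesis using less.prems by (auto simp: Kmat_def)
  qed
  ultimately show ?case by metis
qed

section \<open>Derivatives of \<open>f * Ftil\<close>\<close>

text \<open>Differentiating \<open>\<Sum>\<^sub>p c p * path_sum \<phi> n p k\<close> gives \<open>c' Y + c A Y\<close>, whence the recursion.\<close>

fun deriv_coeff :: "(nat \<Rightarrow> real \<Rightarrow> complex) \<Rightarrow> nat \<Rightarrow> (real \<Rightarrow> complex) \<Rightarrow> nat \<Rightarrow> nat \<Rightarrow> real \<Rightarrow> complex"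
  where
  "deriv_coeff \<phi> n f 0 p = (\<lambda>x. if p = 0 then f x else 0)"
| "deriv_coeff \<phi> n f (Suc i) p =
    (\<lambda>x. vderiv (deriv_coeff \<phi> n f i p) x + (\<Sum>r<2 * n. deriv_coeff \<phi> n f i r x * adj \<phi> n r p x))"

lemma smooth_adj:
  assumes n: "n \<ge> 3" and sm: "\<forall>a\<in>{1..2 * n - 2}. smooth (\<phi> a)"
  shows "smooth (adj \<phi> n p q)"
proof (cases "map_of (out_edges n p) q")
  case None
  then have "adj \<phi> n p q = (\<lambda>x. 0)" by (simp add: adj_def fun_eq_iff)
  then show ?thesis by (simp add: smooth_const)
next
  case (Some a)
  then have "a \<in> {1..2 * n - 2}"
    using out_edges_bounds[OF n] by (blast dest: map_of_SomeD)
  moreover have "adj \<phi> n p q = \<phi> a" using Some by (simp add: adj_def fun_eq_iff)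
  ultimately show ?thesis using sm by simp
qed

lemma smooth_deriv_coeff:
  assumes n: "n \<ge> 3" and sm: "\<forall>a\<in>{1..2 * n - 2}. smooth (\<phi> a)" and f: "smooth f"
  shows "smooth (deriv_coeff \<phi> n f i p)"
proof (induction i arbitrary: p)
  case 0
  then show ?case using f by (cases "p = 0") (auto simp: smooth_const)
next
  case (Suc i)
  then show ?case unfolding deriv_coeff.simps
    by (intro smooth_add smooth_vderiv smooth_sum smooth_mult smooth_adj[OF n sm]) auto
qed

lemma hderiv_mult_path_sum:
  assumes n: "n \<ge> 3" and sm: "\<forall>a\<in>{1..2 * n - 2}. smooth (\<phi> a)" and f: "smooth f"
  shows "hderiv i (\<lambda>x. f x * path_sum \<phi> n 0 k x)
       = (\<lambda>x. \<Sum>p<2 * n. deriv_coeff \<phi> n f i p x * path_sum \<phi> n p k x)"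
proof (induction i)
  case 0
  have "(\<Sum>p<2 * n. deriv_coeff \<phi> n f 0 p x * path_sum \<phi> n p k x)
      = (\<Sum>p<2 * n. if p = 0 then f x * path_sum \<phi> n p k x else 0)" for x
    by (rule sum.cong) auto
  then have "(\<Sum>p<2 * n. deriv_coeff \<phi> n f 0 p x * path_sum \<phi> n p k x) = f x * path_sum \<phi> n 0 k x" for x
    using n by simp
  then show ?case by (simp add: fun_eq_iff)
next
  case (Suc i)
  have cont: "\<forall>a\<in>{1..2 * n - 2}. continuous_on UNIV (\<phi> a)"
    using sm smooth_continuous_on by blast
  have "((\<lambda>x. \<Sum>p<2 * n. deriv_coeff \<phi> n f i p x * path_sum \<phi> n p k x) has_vector_derivative
      (\<Sum>p<2 * n. deriv_coeff \<phi> n f i p x * (\<Sum>q<2 * n. adj \<phi> n p q x * path_sum \<phi> n q k x)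
                 + vderiv (deriv_coeff \<phi> n f i p) x * path_sum \<phi> n p k x)) (at x)" for x
    by (intro has_vector_derivative_sum has_vector_derivative_mult has_vector_derivative_vderiv
        smooth_differentiable smooth_deriv_coeff[OF n sm f] has_vector_derivative_path_sum[OF n cont])
  moreover have "(\<Sum>p<2 * n. deriv_coeff \<phi> n f i p x * (\<Sum>q<2 * n. adj \<phi> n p q x * path_sum \<phi> n q k x)
                 + vderiv (deriv_coeff \<phi> n f i p) x * path_sum \<phi> n p k x)
      = (\<Sum>q<2 * n. deriv_coeff \<phi> n f (Suc i) q x * path_sum \<phi> n q k x)" for x
  proof -
    have "(\<Sum>p<2 * n. deriv_coeff \<phi> n f i p x * (\<Sum>q<2 * n. adj \<phi> n p q x * path_sum \<phi> n q k x))
        = (\<Sum>q<2 * n. (\<Sum>p<2 * n. deriv_coeff \<phi> n f i p x * adj \<phi> n p q x) * path_sum \<phi> n q k x)"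
      by (rule sum_mult_sum_assoc)
    then show ?thesis by (simp add: sum.distrib distrib_right)
  qed
  ultimately show ?case
    unfolding hderiv_Suc Suc.IH by (simp add: fun_eq_iff vderiv_eqI)
qed

definition level :: "nat \<Rightarrow> nat \<Rightarrow> nat" where
  "level n p = (if p < n then p else p - 1)"

lemma level_out_edge:
  assumes "n \<ge> 3" "(q, a) \<in> set (out_edges n p)"
  shows "level n q = Suc (level n p)"
  using assms(2) by (cases rule: out_edges_cases) (use assms(1) in \<open>auto simp: level_def\<close>)

lemma level_reflect: "n \<ge> 1 \<Longrightarrow> p < 2 * n \<Longrightarrow> level n p + level n (2 * n - 1 - p) = 2 * n - 2"
  by (auto simp: level_def)

lemma deriv_coeff_below_level:
  assumes n: "n \<ge> 3"
  shows "i < level n p \<Longrightarrow> deriv_coeff \<phi> n f i p x = 0"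
proof (induction i arbitrary: p x)
  case 0
  then show ?case by (auto simp: level_def split: if_splits)
next
  case (Suc i)
  have "deriv_coeff \<phi> n f i r x * adj \<phi> n r p x = 0" for r
  proof (cases "adj \<phi> n r p x = 0")
    case False
    then obtain a where "(p, a) \<in> set (out_edges n r)" using adj_nonzero by blast
    then have "level n p = Suc (level n r)" by (rule level_out_edge[OF n])
    then show ?thesis using Suc by simp
  qed simp
  then have "(\<Sum>r<2 * n. deriv_coeff \<phi> n f i r x * adj \<phi> n r p x) = 0"
    by (intro sum.neutral) blast
  moreover have "deriv_coeff \<phi> n f i p = (\<lambda>x. 0)" using Suc by (auto simp: fun_eq_iff)
  ultimately show ?case by (simp add: vderiv_def)
qed

lemma adj_into_low:
  assumes "n \<ge> 3" "1 \<le> q" "q \<le> n - 1"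
  shows "adj \<phi> n r q x = (if r = q - 1 then \<phi> q x else 0)"
  using assms unfolding adj_def out_edges_def
  by (cases "r + 3 \<le> n"; cases "r + 2 = n"; cases "r + 1 = n"; cases "r = n";
      cases "r + 2 \<le> 2 * n") auto

lemma adj_into_n:
  assumes "n \<ge> 3"
  shows "adj \<phi> n r n x = (if r = n - 2 then \<phi> n x else 0)"
  using assms unfolding adj_def out_edges_def
  by (cases "r + 3 \<le> n"; cases "r + 2 = n"; cases "r + 1 = n"; cases "r = n";
      cases "r + 2 \<le> 2 * n") auto

lemma deriv_coeff_diagonal:
  assumes n: "n \<ge> 3"
  shows "p \<le> n - 1 \<Longrightarrow> deriv_coeff \<phi> n f p p x = f x * (\<Prod>a\<in>{1..p}. \<phi> a x)"
proof (induction p arbitrary: x)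
  case (Suc p)
  have "deriv_coeff \<phi> n f p (Suc p) = (\<lambda>x. 0)"
    using Suc.prems by (auto simp: fun_eq_iff level_def intro!: deriv_coeff_below_level[OF n])
  moreover have "(\<Sum>r<2 * n. deriv_coeff \<phi> n f p r x * adj \<phi> n r (Suc p) x)
      = (\<Sum>r<2 * n. if r = p then deriv_coeff \<phi> n f p r x * \<phi> (Suc p) x else 0)"
    using Suc.prems by (intro sum.cong) (auto simp: adj_into_low[OF n])
  moreover have "p < 2 * n" using Suc.prems by simp
  ultimately show ?case
    using Suc by (simp add: vderiv_def)
qed simp

lemma deriv_coeff_n_minus_1:
  assumes n: "n \<ge> 3"
  shows "deriv_coeff \<phi> n f (n - 1) (n - 1) x = f x * (\<Prod>a\<in>{1..n - 2}. \<phi> a x) * \<phi> (n - 1) x"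
proof -
  have "n - 1 = Suc (n - 2)" using n by simp
  then show ?thesis using deriv_coeff_diagonal[OF n, of "n - 1" \<phi> f x] by simp
qed

lemma deriv_coeff_n:
  assumes n: "n \<ge> 3"
  shows "deriv_coeff \<phi> n f (n - 1) n x = f x * (\<Prod>a\<in>{1..n - 2}. \<phi> a x) * \<phi> n x"
proof -
  have "n - 1 = Suc (n - 2)" using n by simp
  moreover have "deriv_coeff \<phi> n f (n - 2) n = (\<lambda>x. 0)"
    using n by (auto simp: fun_eq_iff level_def intro!: deriv_coeff_below_level[OF n])
  moreover have "(\<Sum>r<2 * n. deriv_coeff \<phi> n f (n - 2) r x * adj \<phi> n r n x)
      = (\<Sum>r<2 * n. if r = n - 2 then deriv_coeff \<phi> n f (n - 2) r x * \<phi> n x else 0)"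
    by (intro sum.cong) (auto simp: adj_into_n[OF n])
  moreover have "n - 2 < 2 * n" using n by simp
  ultimately show ?thesis
    using deriv_coeff_diagonal[OF n, of "n - 2"] by (simp add: vderiv_def)
qed

lemma hderiv_pairing_expansion:
  assumes n: "n \<ge> 3" and sm: "\<forall>a\<in>{1..2 * n - 2}. smooth (\<phi> a)" and f: "smooth f"
  shows "(\<Sum>k<2 * n. hderiv i (\<lambda>x. f x * Ftil n \<phi> k x) x * Kentry n k *
            hderiv j (\<lambda>x. f x * Ftil n (\<lambda>a. \<phi> (sperm n a)) (2 * n - 1 - k) x) x)
       = (\<Sum>p<2 * n. deriv_coeff \<phi> n f i p x * deriv_coeff (\<lambda>a. \<phi> (sperm n a)) n f j (2 * n - 1 - p) x
            * Kentry n p)"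
proof -
  let ?\<psi> = "\<lambda>a. \<phi> (sperm n a)"
  let ?c = "\<lambda>p. deriv_coeff \<phi> n f i p x" and ?d = "\<lambda>q. deriv_coeff ?\<psi> n f j q x"
  have sm': "\<forall>a\<in>{1..2 * n - 2}. smooth (?\<psi> a)"
    using sm sperm_range[OF n] by auto
  have cont: "\<forall>a\<in>{1..2 * n - 2}. continuous_on UNIV (\<phi> a)"
    using sm smooth_continuous_on by blast
  have expand: "hderiv m (\<lambda>x. f x * Ftil n w k x)
      = (\<lambda>x. \<Sum>p<2 * n. deriv_coeff w n f m p x * path_sum w n p k x)"
    if "\<forall>a\<in>{1..2 * n - 2}. smooth (w a)" "k < 2 * n" for m w k
    using Ftil_eq_path_sum[OF n that(2)] hderiv_mult_path_sum[OF n that(1) f] by simp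
  have "(\<Sum>k<2 * n. hderiv i (\<lambda>x. f x * Ftil n \<phi> k x) x * Kentry n k *
            hderiv j (\<lambda>x. f x * Ftil n ?\<psi> (2 * n - 1 - k) x) x)
      = (\<Sum>k<2 * n. (\<Sum>p<2 * n. ?c p * path_sum \<phi> n p k x) * Kentry n k *
            (\<Sum>q<2 * n. ?d q * path_sum ?\<psi> n q (2 * n - 1 - k) x))"
    by (rule sum.cong) (auto simp: expand[OF sm] expand[OF sm'])
  also have "\<dots> = (\<Sum>p<2 * n. \<Sum>q<2 * n. ?c p * ?d q * pairing \<phi> n p q x)"
    unfolding pairing_def by (rule sum_bilinear_swap)
  also have "\<dots> = (\<Sum>p<2 * n. \<Sum>q<2 * n. if q = 2 * n - 1 - p then ?c p * ?d q * Kentry n p else 0)"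
    by (intro sum.cong refl) (auto simp: pairing_eq_Kmat[OF n cont] Kmat_def)
  also have "\<dots> = (\<Sum>p<2 * n. ?c p * ?d (2 * n - 1 - p) * Kentry n p)"
    using n by (intro sum.cong refl) auto
  finally show ?thesis .
qed

lemma prod_labels_split:
  assumes n: "n \<ge> 3"
  shows "(\<Prod>a\<in>{1..2 * n - 2}. \<phi> a x)
       = (\<Prod>a\<in>{1..n - 2}. \<phi> a x) * \<phi> (n - 1) x * \<phi> n x * (\<Prod>a\<in>{1..n - 2}. \<phi> (sperm n a) x)"
proof -
  have "(\<Prod>a\<in>{1..n - 2}. \<phi> (sperm n a) x) = (\<Prod>a\<in>{n + 1..2 * n - 2}. \<phi> a x)"
  proof (rule prod.reindex_bij_witness[where i="\<lambda>a. 2 * n - 1 - a" and j="\<lambda>a. 2 * n - 1 - a"])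
    fix a assume "a \<in> {1..n - 2}"
    then show "2 * n - 1 - (2 * n - 1 - a) = a" "2 * n - 1 - a \<in> {n + 1..2 * n - 2}"
      "\<phi> (2 * n - 1 - a) x = \<phi> (sperm n a) x"
      using n by (auto simp: sperm_def)
  next
    fix b assume "b \<in> {n + 1..2 * n - 2}"
    then show "2 * n - 1 - (2 * n - 1 - b) = b" "2 * n - 1 - b \<in> {1..n - 2}" using n by auto
  qed
  moreover have "(\<Prod>a\<in>{1..n}. \<phi> a x) = (\<Prod>a\<in>{1..n - 2}. \<phi> a x) * \<phi> (n - 1) x * \<phi> n x"
  proof -
    have "(\<Prod>a\<in>{1..Suc (Suc m)}. \<phi> a x) = (\<Prod>a\<in>{1..m}. \<phi> a x) * \<phi> (Suc m) x * \<phi> (Suc (Suc m)) x"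
      for m by simp
    moreover have "Suc (Suc (n - 2)) = n" "Suc (n - 2) = n - 1" using n by simp_all
    ultimately show ?thesis by metis
  qed
  moreover have "(\<Prod>a\<in>{1..2 * n - 2}. \<phi> a x) = (\<Prod>a\<in>{1..n}. \<phi> a x) * (\<Prod>a\<in>{n + 1..2 * n - 2}. \<phi> a x)"
    using prod.ub_add_nat[of 1 n \<phi>' "n - 2" for \<phi>'] n by (simp add: mult_2)
  ultimately show ?thesis by simp
qed

lemma pairing_top_coeffs:
  assumes n: "n \<ge> 3"
  shows "(\<Sum>p<2 * n. deriv_coeff \<phi> n f (n - 1) p x
            * deriv_coeff (\<lambda>a. \<phi> (sperm n a)) n f (n - 1) (2 * n - 1 - p) x * Kentry n p)
       = 2 * (-1) ^ (n - 1) * f x ^ 2 * (\<Prod>a\<in>{1..2 * n - 2}. \<phi> a x)"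
proof -
  let ?\<psi> = "\<lambda>a. \<phi> (sperm n a)"
  define t where "t p = deriv_coeff \<phi> n f (n - 1) p x * deriv_coeff ?\<psi> n f (n - 1) (2 * n - 1 - p) x
            * Kentry n p" for p
  define A where "A = (\<Prod>a\<in>{1..n - 2}. \<phi> a x)"
  define B where "B = (\<Prod>a\<in>{1..n - 2}. ?\<psi> a x)"
  have "t p = 0" if "p < 2 * n" "p \<noteq> n - 1" "p \<noteq> n" for p
  proof -
    have "n - 1 < level n p \<or> n - 1 < level n (2 * n - 1 - p)"
      using level_reflect[of n p] that n by (auto simp: level_def)
    then show ?thesis unfolding t_def using deriv_coeff_below_level[OF n] by auto
  qed
  then have "(\<Sum>p<2 * n. t p) = (\<Sum>p\<in>{n - 1, n}. t p)"
    using n by (intro sum.mono_neutral_right) auto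
  also have "\<dots> = t (n - 1) + t n" using n by simp
  also have "\<dots> = 2 * (-1) ^ (n - 1) * f x ^ 2 * (A * \<phi> (n - 1) x * \<phi> n x * B)"
  proof -
    have idx: "2 * n - 1 - (n - 1) = n" "2 * n - 1 - n = n - 1"
      using n by simp_all
    have K: "Kentry n (n - 1) = (-1) ^ (n - 1)" "Kentry n n = (-1) ^ (n - 1)"
      using n by (simp_all add: Kentry_def)
    have s: "sperm n (n - 1) = n - 1" "sperm n n = n"
      by (simp_all add: sperm_def)
    have c: "deriv_coeff \<phi> n f (n - 1) (n - 1) x = f x * A * \<phi> (n - 1) x"
      "deriv_coeff ?\<psi> n f (n - 1) (n - 1) x = f x * B * \<phi> (n - 1) x"
      "deriv_coeff \<phi> n f (n - 1) n x = f x * A * \<phi> n x"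
      "deriv_coeff ?\<psi> n f (n - 1) n x = f x * B * \<phi> n x"
      by (simp_all only: deriv_coeff_n_minus_1[OF n] deriv_coeff_n[OF n] A_def B_def s)
    show ?thesis
      unfolding t_def idx c K by (simp add: power2_eq_square algebra_simps)
  qed
  finally show ?thesis
    unfolding t_def A_def B_def prod_labels_split[OF n] .
qed

lemma pairing_coeffs_below_top:
  assumes n: "n \<ge> 3" and ij: "i + j < 2 * n - 2"
  shows "(\<Sum>p<2 * n. deriv_coeff \<phi> n f i p x * deriv_coeff (\<lambda>a. \<phi> (sperm n a)) n f j (2 * n - 1 - p) x
            * Kentry n p) = 0"
proof (rule sum.neutral, rule ballI)
  fix p assume "p \<in> {..<2 * n}"
  then have "i < level n p \<or> j < level n (2 * n - 1 - p)"
    using level_reflect[of n p] n ij by auto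
  then show "deriv_coeff \<phi> n f i p x * deriv_coeff (\<lambda>a. \<phi> (sperm n a)) n f j (2 * n - 1 - p) x
      * Kentry n p = 0"
    by (elim disjE) (simp_all add: deriv_coeff_below_level[OF n])
qed

theorem proposition5p8:
  fixes n :: nat and \<phi> :: "nat \<Rightarrow> real \<Rightarrow> complex" and f0 :: "real \<Rightarrow> complex"
    and F sF :: "nat \<Rightarrow> real \<Rightarrow> complex"
  assumes "n \<ge> 3"
    and "\<forall>a\<in>{1..2*n-2}. \<forall>x. \<phi> a x \<noteq> 0"
    and "\<forall>a\<in>{1..2*n-2}. \<forall>k x. hderiv k (\<phi> a) differentiable (at x)"
    and "continuous_on UNIV f0"
    and "\<forall>x. f0 x ^ 2 * (\<Prod>a\<in>{1..2*n-2}. \<phi> a x) = 1"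
    and "F = (\<lambda>k x. f0 x * Ftil n \<phi> k x)"
    and "sF = (\<lambda>k x. f0 x * Ftil n (\<lambda>a. \<phi> (sperm n a)) k x)"
  shows "(\<forall>i j x. i \<le> n - 1 \<and> j \<le> n - 1 \<and> i + j < 2*n - 2 \<longrightarrow>
            (\<Sum>k<2*n. hderiv i (F k) x * Kentry n k * hderiv j (sF (2*n - 1 - k)) x) = 0)
       \<and> (\<forall>x. (\<Sum>k<2*n. hderiv (n-1) (F k) x * Kentry n k * hderiv (n-1) (sF (2*n - 1 - k)) x)
               = 2 * (-1) ^ (n - 1))"
proof -
  note n = assms(1)
  have sm: "\<forall>a\<in>{1..2*n-2}. smooth (\<phi> a)"
    using assms(3) by (simp add: smooth_def)
  have "smooth (\<lambda>x. \<Prod>a\<in>{1..2*n-2}. \<phi> a x)"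
    using sm by (intro smooth_prod) auto
  then have "smooth f0"
    using smooth_if_square_inverse_smooth[OF assms(4)] assms(5) by blast
  note expand = hderiv_pairing_expansion[OF n sm \<open>smooth f0\<close>]
  show ?thesis
    unfolding assms(6,7) expand pairing_top_coeffs[OF n]
    using pairing_coeffs_below_top[OF n] assms(5) by simp
qed

end
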